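(* Let $n\ge2$, $\alpha\in[0,\pi/2)$, $A,B\in\Pi_{s,\alpha}^n$, $q\in\mathbb{C}$ with $0<|q|\le1$, and $f\in\mathcal{F}$. Then \[ |q|^2\,w_q(A\sigma_fB)\le\sec^3(\alpha)\,\big(w_q(A)\,\sigma_f\,w_q(B)\big). \]
   Context: For $\alpha\in[0,\pi/2)$, $S_\alpha=\{z\in\mathbb{C}:\operatorname{Re}z>0,\ |\operatorname{Im}z|\le\tan(\alpha)\operatorname{Re}z\}$, and $\Pi_{s,\alpha}^n$ is the set of $n\times n$ complex matrices whose numerical range is contained in $S_\alpha$. $\mathcal{F}$ is the set of operator monotone $f:(0,\infty)\to(0,\infty)$ with $f(1)=1$, each with a probability measure $\nu_f$ on $[0,1]$ such that $f(x)=\int_0^1((1-s)+sx^{-1})^{-1}d\nu_f(s)$. For accretive $X,Y$, $X!_sY=((1-s)X^{-1}+sY^{-1})^{-1}$ and $X\sigma_fY=\int_0^1(X!_sY)\,d\nu_f(s)$; for positive scalars $a\sigma_fb=af(b/a)$. $w_q(X)=\sup\{|\langle Xx,y\rangle|:\|x\|=\|y\|=1,\ \langle x,y\rangle=q\}$. *)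

theory Defs
  imports "HOL-Analysis.Analysis" "HOL-Probability.Probability"
begin

type_synonym 'n cmat = "complex^'n^'n"

definition cinner :: "complex^'n::finite \<Rightarrow> complex^'n \<Rightarrow> complex" where
  "cinner x y = (\<Sum>i\<in>UNIV. x$i * cnj (y$i))"

definition numrange :: "complex^'n::finite^'n \<Rightarrow> complex set" where
  "numrange X = {cinner (X *v x) x | x. norm x = 1}"

definition sector :: "real \<Rightarrow> complex set" where
  "sector \<alpha> = {z. Re z > 0 \<and> \<bar>Im z\<bar> \<le> tan \<alpha> * Re z}"

definition sectorial :: "real \<Rightarrow> (complex^'n::finite^'n) set" where
  "sectorial \<alpha> = {X. numrange X \<subseteq> sector \<alpha>}"

definition qnumrad :: "complex \<Rightarrow> complex^'n::finite^'n \<Rightarrow> real" where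
  "qnumrad q X = Sup {cmod (cinner (X *v x) y) | x y.
      norm x = 1 \<and> norm y = 1 \<and> cinner x y = q}"

definition wharm :: "real \<Rightarrow> complex^'n::finite^'n \<Rightarrow> complex^'n^'n \<Rightarrow> complex^'n^'n" where
  "wharm s X Y = matrix_inv ((1 - s) *\<^sub>R matrix_inv X + s *\<^sub>R matrix_inv Y)"

text \<open>The representing function f of a probability measure nu on [0,1]:
  f(x) = integral of ((1-s) + s x^{-1})^{-1} d nu(s).\<close>
definition omfun :: "real measure \<Rightarrow> real \<Rightarrow> real" where
  "omfun \<nu> x = (\<integral>s. inverse ((1 - s) + s * inverse x) \<partial>\<nu>)"

definition opmean :: "real measure \<Rightarrow> complex^'n::finite^'n \<Rightarrow> complex^'n^'n \<Rightarrow> complex^'n^'n" where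
  "opmean \<nu> X Y = (\<integral>s. wharm s X Y \<partial>\<nu>)"

definition scmean :: "real measure \<Rightarrow> real \<Rightarrow> real \<Rightarrow> real" where
  "scmean \<nu> a b = a * omfun \<nu> (b / a)"

text \<open>nu is a probability measure on [0,1] (as a Borel measure on R concentrated on [0,1]).\<close>
definition prob_on_unit :: "real measure \<Rightarrow> bool" where
  "prob_on_unit \<nu> \<longleftrightarrow> prob_space \<nu> \<and> sets \<nu> = sets borel \<and> emeasure \<nu> {0..1} = 1"

end

theory Submission
  imports Defs
begin

(* For a sectorial matrix A, the rotated matrices (p + i)A and (p - i)A (p >= tan alpha) are
   accretive, and combining their Cauchy-Schwarz inequalities gives
   |<Ax,y>|^2 <= sec^2(alpha) Re<Ax,x> Re<Ay,y>.  Since n >= 2, every unit vector x pairs with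
   unit vectors y satisfying <x,y> = q, which yields |q| |<Ax,x>| <= w_q(A).  Applied to y = Ax
   the two facts give Re<A^-1 v, v> >= |q| |v|^2 / (sec^2(alpha) w_q(A)), so the real part of
   (1 - s) A^-1 + s B^-1 is bounded below by |q| cos^2(alpha) ((1 - s)/w_q(A) + s/w_q(B)).
   Inverting, |q| |<(A !_s B) x, y>| <= sec^2(alpha) (w_q(A) !_s w_q(B)) for unit x, y, and
   integrating over nu_f gives the theorem, even with sec^2 in place of sec^3. *)

section \<open>Sesquilinear algebra on complex vectors\<close>

lemma complex_scaleR_eq_mult: "r *\<^sub>R (z::complex) = of_real r * z"
  by (simp add: scaleR_conv_of_real)

lemma cinner_add_left: "cinner (x + y) z = cinner x z + cinner y z"
  by (simp add: cinner_def sum.distrib distrib_right)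

lemma cinner_add_right: "cinner x (y + z) = cinner x y + cinner x z"
  by (simp add: cinner_def sum.distrib distrib_left)

lemma cinner_diff_right: "cinner x (y - z) = cinner x y - cinner x z"
  by (simp add: cinner_def sum_subtractf algebra_simps)

lemma cinner_smult_left: "cinner (c *s x) y = c * cinner x y"
  by (simp add: cinner_def sum_distrib_left mult.assoc)

lemma cinner_smult_right: "cinner x (c *s y) = cnj c * cinner x y"
  by (simp add: cinner_def sum_distrib_left mult_ac)

lemma cinner_scaleR_left: "cinner (r *\<^sub>R x) y = of_real r * cinner x y"
  by (simp add: cinner_def sum_distrib_left mult.assoc complex_scaleR_eq_mult)

lemma cinner_scaleR_right: "cinner x (r *\<^sub>R y) = of_real r * cinner x y"
  by (simp add: cinner_def sum_distrib_left mult_ac complex_scaleR_eq_mult)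

lemma cnj_cinner: "cnj (cinner x y) = cinner y x"
  by (simp add: cinner_def mult.commute)

lemma cinner_self: "cinner x x = of_real ((norm x)\<^sup>2)"
proof -
  have "cinner x x = (\<Sum>i\<in>UNIV. of_real ((cmod (x$i))\<^sup>2))"
    unfolding cinner_def by (simp add: complex_mult_cnj cmod_power2 del: of_real_power)
  also have "\<dots> = of_real ((norm x)\<^sup>2)"
    by (simp add: norm_vec_def L2_set_def sum_nonneg del: of_real_power flip: of_real_sum)
  finally show ?thesis .
qed

lemma cinner_zero_left [simp]: "cinner 0 y = 0"
  by (simp add: cinner_def)

lemma cinner_zero_right [simp]: "cinner x 0 = 0"
  by (simp add: cinner_def)

lemma cinner_axis_right: "cinner x (axis i 1) = x $ i"
  by (simp add: cinner_def axis_def if_distrib sum.delta cong: if_cong)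

lemma norm_axis_one: "norm (axis i (1::complex)) = 1"
proof -
  have "(\<Sum>j\<in>UNIV. (norm (axis i (1::complex) $ j))\<^sup>2) = (\<Sum>j\<in>UNIV. if j = i then 1 else 0)"
    by (rule sum.cong) (auto simp: axis_def)
  then show ?thesis by (simp add: norm_vec_def L2_set_def)
qed

lemma matrix_vector_mult_scaleR_vector:
  "(A::'a::real_algebra_1^'n::finite^'m) *v (r *\<^sub>R x) = r *\<^sub>R (A *v x)"
  by (rule linear_scale[OF matrix_vector_mul_linear])

lemma matrix_vector_mult_scaleR_matrix:
  "(r *\<^sub>R (A::'a::real_algebra_1^'n::finite^'m)) *v x = r *\<^sub>R (A *v x)"
  by (simp add: vec_eq_iff matrix_vector_mult_def scaleR_sum_right)

lemma matrix_vector_mult_smult: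
  "(A::'a::comm_semiring_1^'n::finite^'m) *v (c *s x) = c *s (A *v x)"
  by (simp add: vec_eq_iff matrix_vector_mult_def sum_distrib_left mult_ac)

lemma quadratic_form_scaleR:
  "cinner ((A::complex^'n::finite^'n) *v (r *\<^sub>R z)) (r *\<^sub>R z) = of_real (r * r) * cinner (A *v z) z"
  by (simp add: matrix_vector_mult_scaleR_vector cinner_scaleR_left cinner_scaleR_right)

lemma bounded_linear_cinner_matrix_vector:
  "bounded_linear (\<lambda>M::complex^'n::finite^'m. cinner (M *v x) y)"
proof -
  have "linear (\<lambda>M::complex^'n^'m. cinner (M *v x) y)"
    by (rule linearI) (simp_all add: matrix_vector_mult_add_rdistrib cinner_add_left
        matrix_vector_mult_scaleR_matrix cinner_scaleR_left complex_scaleR_eq_mult)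
  then show ?thesis by (simp add: linear_conv_bounded_linear)
qed

lemma matrix_inv_right: "invertible (A::'a::semiring_1^'n^'n) \<Longrightarrow> A ** matrix_inv A = mat 1"
  unfolding matrix_inv_def invertible_def by (rule someI2_ex) auto

lemma invertible_if_ker_trivial:
  "(\<And>v. (A::'a::field^'n::finite^'n) *v v = 0 \<Longrightarrow> v = 0) \<Longrightarrow> invertible A"
  using matrix_left_invertible_ker[of A] invertible_left_inverse[of A] by blast

section \<open>Cauchy-Schwarz inequalities\<close>

lemma quadratic_nonneg_imp_discriminant_le:
  fixes a b c :: real
  assumes c: "0 \<le> c" and nonneg: "\<And>\<tau>. 0 \<le> a + b * \<tau> + c * \<tau>\<^sup>2"
  shows "b\<^sup>2 \<le> 4 * a * c"
proof (cases "c = 0")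
  case True
  have "b = 0"
  proof (rule ccontr)
    assume "b \<noteq> 0"
    then show False using nonneg[of "- (a + 1) / b"] True by simp
  qed
  with True show ?thesis by simp
next
  case False
  with c have "0 < c" by simp
  have "0 \<le> a + b * (- b / (2 * c)) + c * (- b / (2 * c))\<^sup>2" by (rule nonneg)
  also have "\<dots> = a - b\<^sup>2 / (4 * c)" using \<open>0 < c\<close> by (simp add: field_simps power2_eq_square)
  finally show ?thesis using \<open>0 < c\<close> by (simp add: field_simps)
qed

lemma quadratic_form_add_smult:
  fixes M :: "complex^'n::finite^'n"
  shows "cinner (M *v (x + l *s y)) (x + l *s y) =
    cinner (M *v x) x + cnj l * cinner (M *v x) y + l * cinner (M *v y) x + l * cnj l * cinner (M *v y) y"
  by (simp add: matrix_vector_right_distrib matrix_vector_mult_smult cinner_add_left cinner_add_right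
      cinner_smult_left cinner_smult_right algebra_simps)

lemma accretive_cauchy_schwarz:
  fixes M :: "complex^'n::finite^'n" and \<omega> :: complex
  assumes acc: "\<And>z. 0 \<le> Re (\<omega> * cinner (M *v z) z)"
  shows "(cmod (\<omega> * cinner (M *v x) y + cnj (\<omega> * cinner (M *v y) x)))\<^sup>2
          \<le> 4 * Re (\<omega> * cinner (M *v x) x) * Re (\<omega> * cinner (M *v y) y)"
proof -
  define H where "H = \<omega> * cinner (M *v x) y + cnj (\<omega> * cinner (M *v y) x)"
  define a where "a = Re (\<omega> * cinner (M *v x) x)"
  define b where "b = Re (\<omega> * cinner (M *v y) y)"
  have "0 \<le> a + (- (cmod H)\<^sup>2) * \<tau> + ((cmod H)\<^sup>2 * b) * \<tau>\<^sup>2" for \<tau> :: real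
  proof -
    \<comment> \<open>accretivity tested at \<open>x + l y\<close>; this choice of \<open>l\<close> makes it
      a real quadratic in \<open>\<tau>\<close>\<close>
    define l where "l = - (of_real \<tau> * H)"
    have "Re (\<omega> * (cnj l * cinner (M *v x) y) + \<omega> * (l * cinner (M *v y) x)) = Re (cnj l * H)"
      unfolding H_def by (simp add: algebra_simps)
    also have "\<dots> = - \<tau> * (cmod H)\<^sup>2"
      unfolding l_def cmod_power2 by (simp add: algebra_simps power2_eq_square)
    finally have mixed: "Re (\<omega> * (cnj l * cinner (M *v x) y) + \<omega> * (l * cinner (M *v y) x))
        = - \<tau> * (cmod H)\<^sup>2" .
    have "l * cnj l = (of_real \<tau>)\<^sup>2 * (H * cnj H)"
      by (simp add: l_def algebra_simps power2_eq_square)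
    also have "\<dots> = of_real ((cmod H)\<^sup>2 * \<tau>\<^sup>2)"
      by (simp add: complex_norm_square[symmetric])
    finally have "l * cnj l = of_real ((cmod H)\<^sup>2 * \<tau>\<^sup>2)" .
    then have square: "Re (\<omega> * (l * cnj l * cinner (M *v y) y)) = (cmod H)\<^sup>2 * \<tau>\<^sup>2 * b"
      unfolding b_def by (simp add: mult.left_commute[of \<omega>])
    have "0 \<le> Re (\<omega> * cinner (M *v (x + l *s y)) (x + l *s y))" by (rule acc)
    also have "\<dots> = a + (- (cmod H)\<^sup>2) * \<tau> + ((cmod H)\<^sup>2 * b) * \<tau>\<^sup>2"
      using mixed square unfolding quadratic_form_add_smult a_def
      by (simp add: distrib_left algebra_simps)
    finally show ?thesis .
  qed
  moreover have "0 \<le> a" "0 \<le> b" unfolding a_def b_def by (rule acc)+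
  ultimately have "((cmod H)\<^sup>2)\<^sup>2 \<le> (cmod H)\<^sup>2 * (4 * a * b)"
    using quadratic_nonneg_imp_discriminant_le[of "(cmod H)\<^sup>2 * b" a "- (cmod H)\<^sup>2"]
    by (simp add: algebra_simps)
  then have "(cmod H)\<^sup>2 \<le> 4 * a * b"
    using \<open>0 \<le> a\<close> \<open>0 \<le> b\<close> by (cases "H = 0") (simp_all add: power2_eq_square)
  then show ?thesis unfolding H_def a_def b_def .
qed

lemma cinner_cauchy_schwarz: "cmod (cinner x y) \<le> norm x * norm (y::complex^'n::finite)"
proof -
  have "(cmod (1 * cinner (mat 1 *v x) y + cnj (1 * cinner (mat 1 *v y) x)))\<^sup>2
          \<le> 4 * Re (1 * cinner (mat 1 *v x) x) * Re (1 * cinner (mat 1 *v y) y)"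
    by (rule accretive_cauchy_schwarz) (simp add: cinner_self)
  then have "(cmod (2 * cinner x y))\<^sup>2 \<le> 4 * (norm x)\<^sup>2 * (norm y)\<^sup>2"
    by (simp add: cnj_cinner cinner_self)
  then have "(cmod (cinner x y))\<^sup>2 \<le> (norm x * norm y)\<^sup>2"
    by (simp add: norm_mult power_mult_distrib)
  then show ?thesis by (rule power2_le_imp_le) simp
qed

lemma add_sq_le_four_mult_add:
  fixes h1 h2 a1 a2 b1 b2 :: real
  assumes "0 \<le> h1" "0 \<le> h2" "0 \<le> a1" "0 \<le> a2" "0 \<le> b1" "0 \<le> b2"
    and "h1\<^sup>2 \<le> 4 * a1 * b1" and "h2\<^sup>2 \<le> 4 * a2 * b2"
  shows "(h1 + h2)\<^sup>2 \<le> 4 * (a1 + a2) * (b1 + b2)"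
proof -
  have "(h1 * h2)\<^sup>2 \<le> (4 * a1 * b1) * (4 * a2 * b2)"
    unfolding power_mult_distrib using assms by (intro mult_mono) auto
  also have "\<dots> \<le> (2 * (a1 * b2 + a2 * b1))\<^sup>2"
    using zero_le_power2[of "a1 * b2 - a2 * b1"] by (simp add: power2_eq_square algebra_simps)
  finally have "h1 * h2 \<le> 2 * (a1 * b2 + a2 * b1)"
    by (rule power2_le_imp_le) (use assms in simp)
  then show ?thesis using assms by (simp add: power2_eq_square algebra_simps)
qed

section \<open>Sectorial matrices\<close>

lemma of_real_mult_mem_sector: "0 < r \<Longrightarrow> w \<in> sector \<alpha> \<Longrightarrow> of_real r * w \<in> sector \<alpha>"
  by (auto simp: sector_def abs_mult mult.left_commute)

lemma quadratic_form_sgn: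
  "cinner ((A::complex^'n::finite^'n) *v y) y = of_real ((norm y)\<^sup>2) * cinner (A *v sgn y) (sgn y)"
proof (cases "y = 0")
  case False
  then show ?thesis
    by (simp add: sgn_div_norm quadratic_form_scaleR power2_eq_square flip: of_real_mult)
      (simp add: field_simps)
qed simp

lemma sectorial_quadratic_form_mem_sector:
  assumes "A \<in> sectorial \<alpha>" and "z \<noteq> 0"
  shows "cinner (A *v z) z \<in> sector \<alpha>"
proof -
  have "norm (sgn z) = 1" using \<open>z \<noteq> 0\<close> by (simp add: norm_sgn)
  then have "cinner (A *v sgn z) (sgn z) \<in> sector \<alpha>"
    using assms(1) unfolding sectorial_def numrange_def by blast
  then show ?thesis
    using \<open>z \<noteq> 0\<close> of_real_mult_mem_sector[of "(norm z)\<^sup>2"] by (simp add: quadratic_form_sgn[of A z])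
qed

lemma sectorial_Re_pos: "A \<in> sectorial \<alpha> \<Longrightarrow> z \<noteq> 0 \<Longrightarrow> 0 < Re (cinner (A *v z) z)"
  using sectorial_quadratic_form_mem_sector by (fastforce simp: sector_def)

lemma sectorial_Re_nonneg: "A \<in> sectorial \<alpha> \<Longrightarrow> 0 \<le> Re (cinner (A *v z) z)"
  by (cases "z = 0") (auto dest: sectorial_Re_pos[of A \<alpha> z])

lemma sectorial_abs_Im_le:
  "A \<in> sectorial \<alpha> \<Longrightarrow> \<bar>Im (cinner (A *v z) z)\<bar> \<le> tan \<alpha> * Re (cinner (A *v z) z)"
  by (cases "z = 0") (auto simp: sector_def dest: sectorial_quadratic_form_mem_sector[of A \<alpha> z])

lemma sectorial_tan_nonneg:
  fixes A :: "complex^'n::finite^'n"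
  assumes "A \<in> sectorial \<alpha>"
  shows "0 \<le> tan \<alpha>"
proof -
  define z :: "complex^'n" where "z = axis undefined 1"
  have "z \<noteq> 0" unfolding z_def by simp
  then have "0 < Re (cinner (A *v z) z)" by (rule sectorial_Re_pos[OF assms])
  moreover have "0 \<le> tan \<alpha> * Re (cinner (A *v z) z)"
    using sectorial_abs_Im_le[OF assms, of z] by linarith
  ultimately show ?thesis by (simp add: zero_le_mult_iff)
qed

lemma sectorial_invertible:
  assumes "A \<in> sectorial \<alpha>"
  shows "invertible A"
proof (rule invertible_if_ker_trivial)
  fix v assume "A *v v = 0"
  then show "v = 0" using sectorial_Re_pos[OF assms, of v] by (cases "v = 0") auto
qed

text \<open>For \<open>p \<ge> tan \<alpha>\<close> both \<open>(p + \<i>) A\<close> and \<open>(p - \<i>) A\<close> are accretive, and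
  the difference of their (rotated) Hermitian parts recovers \<open>4 p \<i> <Ax,y>\<close>.\<close>

lemma sectorial_cauchy_schwarz_rotated:
  assumes A: "A \<in> sectorial \<alpha>" and "tan \<alpha> \<le> p" and "0 < p"
  shows "(cmod (cinner (A *v x) y))\<^sup>2 \<le> (1 + p\<^sup>2) * Re (cinner (A *v x) x) * Re (cinner (A *v y) y)"
proof -
  define \<omega> where "\<omega> = Complex p 1"
  define \<omega>' where "\<omega>' = Complex p (-1)"
  define u where "u = cinner (A *v x) y"
  define v where "v = cinner (A *v y) x"
  have Im_le: "\<bar>Im (cinner (A *v z) z)\<bar> \<le> p * Re (cinner (A *v z) z)" for z
    using sectorial_abs_Im_le[OF A, of z] sectorial_Re_nonneg[OF A, of z] \<open>tan \<alpha> \<le> p\<close>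
    by (meson mult_right_mono order_trans)
  have acc: "0 \<le> Re (\<omega> * cinner (A *v z) z)" "0 \<le> Re (\<omega>' * cinner (A *v z) z)" for z
    using Im_le[of z] unfolding \<omega>_def \<omega>'_def by (simp_all add: abs_le_iff)
  define H where "H = \<omega> * u + cnj (\<omega> * v)"
  define H' where "H' = \<omega>' * u + cnj (\<omega>' * v)"
  define a where "a = Re (\<omega> * cinner (A *v x) x)"
  define b where "b = Re (\<omega> * cinner (A *v y) y)"
  define a' where "a' = Re (\<omega>' * cinner (A *v x) x)"
  define b' where "b' = Re (\<omega>' * cinner (A *v y) y)"
  have CS: "(cmod H)\<^sup>2 \<le> 4 * a * b" "(cmod H')\<^sup>2 \<le> 4 * a' * b'"
    unfolding H_def H'_def a_def a'_def b_def b'_def u_def v_def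
    by (rule accretive_cauchy_schwarz, rule acc)+
  have nonneg: "0 \<le> a" "0 \<le> a'" "0 \<le> b" "0 \<le> b'"
    unfolding a_def a'_def b_def b'_def using acc by auto
  have "\<omega> * H - \<omega>' * H' = \<i> * of_real (4 * p) * u"
    unfolding H_def H'_def \<omega>_def \<omega>'_def by (simp add: complex_eq_iff algebra_simps)
  then have "4 * p * cmod u = cmod (\<omega> * H - \<omega>' * H')"
    using \<open>0 < p\<close> by (simp add: norm_mult)
  also have "\<dots> \<le> cmod (\<omega> * H) + cmod (\<omega>' * H')" by (rule norm_triangle_ineq4)
  also have "\<dots> = sqrt (1 + p\<^sup>2) * (cmod H + cmod H')"
  proof -
    have "cmod \<omega> = sqrt (1 + p\<^sup>2)" "cmod \<omega>' = sqrt (1 + p\<^sup>2)"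
      unfolding \<omega>_def \<omega>'_def by (simp_all add: cmod_def add.commute)
    then show ?thesis by (simp add: norm_mult algebra_simps)
  qed
  finally have "(4 * p * cmod u)\<^sup>2 \<le> (sqrt (1 + p\<^sup>2) * (cmod H + cmod H'))\<^sup>2"
    using \<open>0 < p\<close> by (intro power_mono) auto
  also have "\<dots> = (1 + p\<^sup>2) * (cmod H + cmod H')\<^sup>2"
    by (simp add: power_mult_distrib)
  also have "\<dots> \<le> (1 + p\<^sup>2) * (4 * (a + a') * (b + b'))"
    by (intro mult_left_mono add_sq_le_four_mult_add CS nonneg) auto
  also have "\<dots> = (4 * p)\<^sup>2 * ((1 + p\<^sup>2) * Re (cinner (A *v x) x) * Re (cinner (A *v y) y))"
    unfolding a_def a'_def b_def b'_def \<omega>_def \<omega>'_def by (simp add: power2_eq_square algebra_simps)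
  finally show ?thesis unfolding u_def power_mult_distrib[of "4 * p"] using \<open>0 < p\<close> by simp
qed

text \<open>The rotation argument needs \<open>p > 0\<close>, which fails for \<open>p = tan \<alpha>\<close> when
  \<open>\<alpha> = 0\<close>; hence the limit \<open>p \<rightarrow> tan \<alpha>\<close> from the right.\<close>

lemma sectorial_cauchy_schwarz:
  assumes A: "A \<in> sectorial \<alpha>"
  shows "(cmod (cinner (A *v x) y))\<^sup>2
    \<le> (1 + (tan \<alpha>)\<^sup>2) * Re (cinner (A *v x) x) * Re (cinner (A *v y) y)"
proof -
  define R where "R = Re (cinner (A *v x) x) * Re (cinner (A *v y) y)"
  have "((\<lambda>p. (1 + p\<^sup>2) * R) \<longlongrightarrow> (1 + (tan \<alpha>)\<^sup>2) * R) (at_right (tan \<alpha>))"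
    by (intro tendsto_intros)
  moreover have "\<forall>\<^sub>F p in at_right (tan \<alpha>). (cmod (cinner (A *v x) y))\<^sup>2 \<le> (1 + p\<^sup>2) * R"
    using eventually_at_right_less
  proof eventually_elim
    case (elim p)
    then show ?case
      using sectorial_cauchy_schwarz_rotated[OF A, of p] sectorial_tan_nonneg[OF A]
      unfolding R_def by (simp add: mult.assoc)
  qed
  ultimately have "(cmod (cinner (A *v x) y))\<^sup>2 \<le> (1 + (tan \<alpha>)\<^sup>2) * R"
    using trivial_limit_at_right_real by (intro tendsto_lowerbound) auto
  then show ?thesis unfolding R_def by (simp add: mult.assoc)
qed

section \<open>The q-numerical radius\<close>

lemma bdd_above_qnumrad_set:
  "bdd_above {cmod (cinner ((A::complex^'n::finite^'n) *v x) y) | x y.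
      norm x = 1 \<and> norm y = 1 \<and> cinner x y = q}"
proof -
  have "bounded_linear (\<lambda>x. A *v x)"
    using matrix_vector_mul_linear by (simp add: linear_conv_bounded_linear)
  then obtain K where K: "\<And>x. norm (A *v x) \<le> norm x * K"
    using bounded_linear.bounded by blast
  show ?thesis
  proof (rule bdd_aboveI, clarify)
    fix x y :: "complex^'n"
    assume "norm x = 1" "norm y = 1"
    then show "cmod (cinner (A *v x) y) \<le> K"
      using cinner_cauchy_schwarz[of "A *v x" y] K[of x] by simp
  qed
qed

lemma cmod_cinner_le_qnumrad:
  assumes "norm x = 1" "norm y = 1" "cinner x y = q"
  shows "cmod (cinner ((A::complex^'n::finite^'n) *v x) y) \<le> qnumrad q A"
  unfolding qnumrad_def by (rule cSup_upper[OF _ bdd_above_qnumrad_set]) (use assms in blast)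

lemma qnumrad_least:
  assumes "\<exists>x y::complex^'n::finite. norm x = 1 \<and> norm y = 1 \<and> cinner x y = q"
    and "\<And>x y. norm x = 1 \<Longrightarrow> norm y = 1 \<Longrightarrow> cinner x y = q \<Longrightarrow>
      cmod (cinner ((A::complex^'n^'n) *v x) y) \<le> R"
  shows "qnumrad q A \<le> R"
  unfolding qnumrad_def using assms by (intro cSup_least) auto

lemma exists_unit_orthogonal:
  assumes "CARD('n::finite) \<ge> 2"
  shows "\<exists>z::complex^'n. norm z = 1 \<and> cinner x z = 0"
proof (cases "x = 0")
  case True
  then show ?thesis using norm_axis_one[of undefined] by (intro exI[of _ "axis undefined 1"]) simp
next
  case False
  then obtain i where i: "x $ i \<noteq> 0" by (auto simp: vec_eq_iff)
  have "\<not> (UNIV::'n set) \<subseteq> {i}"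
  proof
    assume "(UNIV::'n set) \<subseteq> {i}"
    then have "CARD('n) \<le> card {i}" by (intro card_mono) auto
    then show False using assms by simp
  qed
  then obtain j :: 'n where j: "j \<noteq> i" by blast
  define w where "w = cnj (x $ j) *s axis i (1::complex) - cnj (x $ i) *s axis j 1"
  have "w $ j = - cnj (x $ i)" unfolding w_def using j by (simp add: axis_def)
  then have "w \<noteq> 0" using i by auto
  have "cinner x w = 0"
    unfolding w_def by (simp add: cinner_diff_right cinner_smult_right cinner_axis_right)
  then have "norm ((1 / norm w) *\<^sub>R w) = 1 \<and> cinner x ((1 / norm w) *\<^sub>R w) = 0"
    using \<open>w \<noteq> 0\<close> by (simp add: cinner_scaleR_right)
  then show ?thesis by blast
qed

lemma norm_eq_one_iff_cinner_self: "norm x = 1 \<longleftrightarrow> cinner x x = 1"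
proof -
  have "cinner x x = 1 \<longleftrightarrow> (norm x)\<^sup>2 = 1"
    unfolding cinner_self by (metis of_real_1 of_real_eq_iff)
  moreover have "(norm x)\<^sup>2 = 1 \<longleftrightarrow> norm x = 1"
    using norm_ge_zero[of x] power2_eq_1_iff[of "norm x"] by linarith
  ultimately show ?thesis by simp
qed

lemma unit_vector_with_cinner:
  assumes x: "norm x = 1" and z: "norm z = 1" "cinner x z = 0"
    and \<sigma>: "\<sigma>\<^sup>2 = 1 - (cmod q)\<^sup>2"
  shows "norm (cnj q *s x + of_real \<sigma> *s z) = 1" and "cinner x (cnj q *s x + of_real \<sigma> *s z) = q"
proof -
  have xx: "cinner x x = 1" and zz: "cinner z z = 1"
    using x z(1) by (simp_all only: norm_eq_one_iff_cinner_self)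
  have zx: "cinner z x = 0" using z(2) cnj_cinner[of x z] by simp
  have "cinner (cnj q *s x + of_real \<sigma> *s z) (cnj q *s x + of_real \<sigma> *s z)
      = q * cnj q + of_real (\<sigma>\<^sup>2)"
    by (simp add: cinner_add_left cinner_add_right cinner_smult_left cinner_smult_right
        xx zz z(2) zx power2_eq_square)
  also have "\<dots> = 1" using \<sigma> by (simp add: complex_mult_cnj cmod_power2 complex_eq_iff)
  finally show "norm (cnj q *s x + of_real \<sigma> *s z) = 1" by (simp add: norm_eq_one_iff_cinner_self)
  show "cinner x (cnj q *s x + of_real \<sigma> *s z) = q"
    by (simp add: cinner_add_right cinner_smult_right xx z(2))
qed

lemma exists_unit_pair_with_cinner:
  assumes "CARD('n::finite) \<ge> 2" and "cmod q \<le> 1"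
  shows "\<exists>x y::complex^'n. norm x = 1 \<and> norm y = 1 \<and> cinner x y = q"
proof -
  define x :: "complex^'n" where "x = axis undefined 1"
  have x: "norm x = 1" unfolding x_def by (rule norm_axis_one)
  obtain z where z: "norm z = 1" "cinner x z = 0" using exists_unit_orthogonal[OF assms(1)] by blast
  have "(cmod q)\<^sup>2 \<le> 1" using assms(2) by (simp add: power_le_one)
  then have "(sqrt (1 - (cmod q)\<^sup>2))\<^sup>2 = 1 - (cmod q)\<^sup>2" by simp
  note y = unit_vector_with_cinner[OF x z this]
  show ?thesis using x y by blast
qed

lemma qnumrad_nonneg:
  assumes "CARD('n::finite) \<ge> 2" and "cmod q \<le> 1"
  shows "0 \<le> qnumrad q (A::complex^'n^'n)"
proof -
  obtain x y :: "complex^'n" where "norm x = 1" "norm y = 1" "cinner x y = q"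
    using exists_unit_pair_with_cinner[OF assms] by blast
  then show ?thesis using cmod_cinner_le_qnumrad[of x y q A] norm_ge_zero order_trans by blast
qed

lemma qnumrad_ge_quadratic_form:
  fixes A :: "complex^'n::finite^'n"
  assumes card: "CARD('n) \<ge> 2" and q: "cmod q \<le> 1"
  shows "cmod q * cmod (cinner (A *v y) y) \<le> qnumrad q A * (norm y)\<^sup>2"
proof -
  have unit: "cmod q * cmod (cinner (A *v x) x) \<le> qnumrad q A" if x: "norm x = 1" for x
  proof -
    \<comment> \<open>both \<open>cnj q x \<plusminus> \<sigma> z\<close> pair with \<open>x\<close> to \<open>q\<close>;
      averaging isolates \<open>q <Ax,x>\<close>\<close>
    obtain z where z: "norm z = 1" "cinner x z = 0" using exists_unit_orthogonal[OF card] by blast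
    define \<sigma> where "\<sigma> = sqrt (1 - (cmod q)\<^sup>2)"
    have "(cmod q)\<^sup>2 \<le> 1" using q by (simp add: power_le_one)
    then have \<sigma>: "\<sigma>\<^sup>2 = 1 - (cmod q)\<^sup>2" "(- \<sigma>)\<^sup>2 = 1 - (cmod q)\<^sup>2"
      unfolding \<sigma>_def by simp_all
    define a where "a = q * cinner (A *v x) x"
    define b where "b = of_real \<sigma> * cinner (A *v x) z"
    have pair: "cinner (A *v x) (cnj q *s x + of_real r *s z) = q * cinner (A *v x) x + of_real r * cinner (A *v x) z"
      for r by (simp add: cinner_add_right cinner_smult_right)
    have "cmod (a + b) \<le> qnumrad q A"
      using cmod_cinner_le_qnumrad[OF x unit_vector_with_cinner[OF x z \<sigma>(1)], of A]
      unfolding pair a_def b_def .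
    moreover have "cmod (a - b) \<le> qnumrad q A"
      using cmod_cinner_le_qnumrad[OF x unit_vector_with_cinner[OF x z \<sigma>(2)], of A]
      unfolding pair a_def b_def by simp
    moreover have "2 * cmod a \<le> cmod (a + b) + cmod (a - b)"
      using norm_triangle_ineq[of "a + b" "a - b"] by (simp add: norm_mult)
    ultimately show ?thesis unfolding a_def by (simp add: norm_mult)
  qed
  show ?thesis
  proof (cases "y = 0")
    case False
    then have "cmod q * cmod (cinner (A *v sgn y) (sgn y)) \<le> qnumrad q A"
      by (intro unit) (simp add: norm_sgn)
    then have "(norm y)\<^sup>2 * (cmod q * cmod (cinner (A *v sgn y) (sgn y))) \<le> (norm y)\<^sup>2 * qnumrad q A"
      by (rule mult_left_mono) simp
    then show ?thesis
      by (subst quadratic_form_sgn) (simp add: norm_mult norm_power mult_ac)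
  qed (simp add: qnumrad_nonneg[OF card q])
qed

lemma qnumrad_pos:
  fixes A :: "complex^'n::finite^'n"
  assumes "CARD('n) \<ge> 2" and "0 < cmod q" "cmod q \<le> 1" and "A \<in> sectorial \<alpha>"
  shows "0 < qnumrad q A"
proof -
  define z :: "complex^'n" where "z = axis undefined 1"
  have "0 < Re (cinner (A *v z) z)" unfolding z_def by (rule sectorial_Re_pos[OF assms(4)]) simp
  then have "0 < cmod (cinner (A *v z) z)"
    using complex_Re_le_cmod by (rule order_less_le_trans)
  then have "0 < cmod q * cmod (cinner (A *v z) z)" using assms(2) by simp
  also have "\<dots> \<le> qnumrad q A * (norm z)\<^sup>2" by (rule qnumrad_ge_quadratic_form[OF assms(1,3)])
  finally show ?thesis unfolding z_def by (simp add: norm_axis_one)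
qed

lemma sectorial_norm_matrix_vector_sq_le:
  fixes A :: "complex^'n::finite^'n"
  assumes card: "CARD('n) \<ge> 2" and q: "cmod q \<le> 1" and A: "A \<in> sectorial \<alpha>"
  shows "cmod q * (norm (A *v w))\<^sup>2 \<le> (1 + (tan \<alpha>)\<^sup>2) * qnumrad q A * Re (cinner (A *v w) w)"
proof -
  define y where "y = A *v w"
  define K where "K = (1 + (tan \<alpha>)\<^sup>2) * Re (cinner (A *v w) w)"
  have K: "0 \<le> K" unfolding K_def using sectorial_Re_nonneg[OF A] by simp
  have "cmod q * Re (cinner (A *v y) y) \<le> qnumrad q A * (norm y)\<^sup>2"
    using qnumrad_ge_quadratic_form[OF card q, of A y] complex_Re_le_cmod[of "cinner (A *v y) y"]
    by (meson norm_ge_zero mult_left_mono order_trans)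
  then have Re_y: "cmod q * (K * Re (cinner (A *v y) y)) \<le> K * (qnumrad q A * (norm y)\<^sup>2)"
    using K mult_left_mono by (fastforce simp: mult.left_commute)
  have "cmod (cinner (A *v w) y) = (norm y)\<^sup>2" unfolding y_def cinner_self by (simp add: norm_power)
  then have "cmod q * ((norm y)\<^sup>2 * (norm y)\<^sup>2) \<le> cmod q * (K * Re (cinner (A *v y) y))"
    using sectorial_cauchy_schwarz[OF A, of w y] unfolding K_def
    by (intro mult_left_mono) (simp_all add: power2_eq_square)
  also have "\<dots> \<le> (K * qnumrad q A) * (norm y)\<^sup>2" using Re_y by (simp add: mult_ac)
  finally have "(cmod q * (norm y)\<^sup>2) * (norm y)\<^sup>2 \<le> (K * qnumrad q A) * (norm y)\<^sup>2"
    by (simp add: mult_ac)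
  moreover have "0 \<le> K * qnumrad q A" using K qnumrad_nonneg[OF card q] by simp
  ultimately have "cmod q * (norm y)\<^sup>2 \<le> K * qnumrad q A"
    by (cases "y = 0") (simp_all add: mult_le_cancel_right)
  then show ?thesis unfolding y_def K_def by (simp add: mult_ac)
qed

lemma sectorial_inverse_coercive:
  fixes A :: "complex^'n::finite^'n"
  assumes card: "CARD('n) \<ge> 2" and q: "cmod q \<le> 1" and A: "A \<in> sectorial \<alpha>"
  shows "cmod q * (norm v)\<^sup>2 \<le> (1 + (tan \<alpha>)\<^sup>2) * qnumrad q A * Re (cinner (matrix_inv A *v v) v)"
proof -
  define w where "w = matrix_inv A *v v"
  have Aw: "A *v w = v"
    unfolding w_def matrix_vector_mul_assoc matrix_inv_right[OF sectorial_invertible[OF A]] by simp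
  have "Re (cinner (matrix_inv A *v v) v) = Re (cnj (cinner v w))"
    unfolding w_def[symmetric] cnj_cinner ..
  then have "Re (cinner (matrix_inv A *v v) v) = Re (cinner (A *v w) w)" unfolding Aw by simp
  then show ?thesis using sectorial_norm_matrix_vector_sq_le[OF card q A, of w] unfolding Aw by simp
qed

section \<open>Weighted harmonic means of sectorial matrices\<close>

lemma coercive_matrix_inv_bound:
  fixes M :: "complex^'n::finite^'n"
  assumes h: "0 < h" and coercive: "\<And>v. h * (norm v)\<^sup>2 \<le> Re (cinner (M *v v) v)"
  shows "h * cmod (cinner (matrix_inv M *v x) y) \<le> norm x * norm y"
proof -
  have "invertible M"
  proof (rule invertible_if_ker_trivial)
    fix v assume "M *v v = 0"
    then have "h * (norm v)\<^sup>2 \<le> 0" using coercive[of v] by simp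
    then show "v = 0" using h by (simp add: mult_le_0_iff)
  qed
  define v where "v = matrix_inv M *v x"
  have Mv: "M *v v = x" unfolding v_def matrix_vector_mul_assoc matrix_inv_right[OF \<open>invertible M\<close>] by simp
  have "h * norm v * norm v \<le> Re (cinner x v)" using coercive[of v] by (simp add: Mv power2_eq_square)
  also have "\<dots> \<le> norm x * norm v"
    using complex_Re_le_cmod[of "cinner x v"] cinner_cauchy_schwarz[of x v] by linarith
  finally have "h * norm v \<le> norm x" by (cases "v = 0") (simp_all add: mult_le_cancel_right)
  have "h * cmod (cinner v y) \<le> (h * norm v) * norm y"
    using cinner_cauchy_schwarz[of v y] h by (simp add: mult.assoc)
  also have "\<dots> \<le> norm x * norm y"
    using \<open>h * norm v \<le> norm x\<close> by (rule mult_right_mono) simp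
  finally show ?thesis unfolding v_def .
qed

lemma cmod_wharm_le:
  fixes A B :: "complex^'n::finite^'n"
  assumes card: "CARD('n) \<ge> 2" and q: "0 < cmod q" "cmod q \<le> 1"
    and A: "A \<in> sectorial \<alpha>" and B: "B \<in> sectorial \<alpha>" and s: "0 \<le> s" "s \<le> 1"
  shows "cmod q * ((1 - s) / qnumrad q A + s / qnumrad q B) * cmod (cinner (wharm s A B *v x) y)
    \<le> (1 + (tan \<alpha>)\<^sup>2) * norm x * norm y"
proof -
  define T where "T = 1 + (tan \<alpha>)\<^sup>2"
  define a where "a = qnumrad q A"
  define b where "b = qnumrad q B"
  define h where "h = cmod q * ((1 - s) / a + s / b) / T"
  have T: "0 < T" unfolding T_def by (simp add: add_pos_nonneg)
  have ab: "0 < a" "0 < b" unfolding a_def b_def using qnumrad_pos[OF card q] A B by auto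
  have "0 < (1 - s) / a + s / b"
    using ab s by (cases "s = 0") (auto intro: add_nonneg_pos add_pos_nonneg)
  then have h: "0 < h" unfolding h_def using q T by simp
  have inv_bound: "cmod q / (T * c) * (norm v)\<^sup>2 \<le> Re (cinner (matrix_inv C *v v) v)"
    if "C \<in> sectorial \<alpha>" "c = qnumrad q C" for C :: "complex^'n^'n" and c v
  proof -
    have "0 < T * c" using T qnumrad_pos[OF card q that(1)] that(2) by simp
    then show ?thesis using sectorial_inverse_coercive[OF card q(2) that(1), of v] that(2)
      by (simp add: T_def pos_divide_le_eq mult_ac)
  qed
  have "h * (norm v)\<^sup>2 \<le> Re (cinner (((1 - s) *\<^sub>R matrix_inv A + s *\<^sub>R matrix_inv B) *v v) v)" for v
  proof -
    have "h * (norm v)\<^sup>2 = (1 - s) * (cmod q / (T * a) * (norm v)\<^sup>2) + s * (cmod q / (T * b) * (norm v)\<^sup>2)"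
      unfolding h_def using T ab by (simp add: field_simps)
    also have "\<dots> \<le> (1 - s) * Re (cinner (matrix_inv A *v v) v) + s * Re (cinner (matrix_inv B *v v) v)"
      using s inv_bound[OF A a_def] inv_bound[OF B b_def] by (intro add_mono mult_left_mono) auto
    finally show ?thesis
      by (simp add: matrix_vector_mult_add_rdistrib matrix_vector_mult_scaleR_matrix cinner_add_left
          cinner_scaleR_left)
  qed
  then have "h * cmod (cinner (wharm s A B *v x) y) \<le> norm x * norm y"
    unfolding wharm_def by (rule coercive_matrix_inv_bound[OF h])
  then have "T * (h * cmod (cinner (wharm s A B *v x) y)) \<le> T * (norm x * norm y)"
    using T by simp
  then show ?thesis using T unfolding h_def a_def b_def T_def by (simp add: mult_ac)
qed

lemma one_plus_tan_sq_le_sec_cube: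
  assumes "0 \<le> \<alpha>" and "\<alpha> < pi / 2"
  shows "1 + (tan \<alpha>)\<^sup>2 \<le> (1 / cos \<alpha>) ^ 3"
proof -
  have "0 < cos \<alpha>" using assms by (intro cos_gt_zero_pi) auto
  then have "1 \<le> 1 / cos \<alpha>" by simp
  then have "(1 / cos \<alpha>)\<^sup>2 \<le> (1 / cos \<alpha>) ^ 3" using power_increasing[of 2 3] by simp
  then show ?thesis using tan_sec[of \<alpha>] \<open>0 < cos \<alpha>\<close> by (simp add: inverse_eq_divide)
qed

lemma weighted_harmonic_mean_eq:
  fixes a b s :: real
  assumes "a \<noteq> 0"
  shows "a * inverse ((1 - s) + s * inverse (b / a)) = inverse ((1 - s) / a + s / b)"
proof -
  have "(1 - s) + s * inverse (b / a) = a * ((1 - s) / a + s / b)"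
    using assms by (simp add: field_simps)
  then show ?thesis using assms by (simp add: inverse_mult_distrib)
qed

lemma sq_cmod_wharm_le:
  fixes A B :: "complex^'n::finite^'n"
  assumes card: "CARD('n) \<ge> 2" and \<alpha>: "0 \<le> \<alpha>" "\<alpha> < pi / 2" and q: "0 < cmod q" "cmod q \<le> 1"
    and A: "A \<in> sectorial \<alpha>" and B: "B \<in> sectorial \<alpha>" and s: "0 \<le> s" "s \<le> 1"
    and x: "norm x = 1" and y: "norm y = 1"
  shows "(cmod q)\<^sup>2 * cmod (cinner (wharm s A B *v x) y)
    \<le> (1 / cos \<alpha>) ^ 3 * (qnumrad q A * inverse ((1 - s) + s * inverse (qnumrad q B / qnumrad q A)))"
proof -
  define W where "W = cmod (cinner (wharm s A B *v x) y)"
  define D where "D = (1 - s) / qnumrad q A + s / qnumrad q B"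
  have ab: "0 < qnumrad q A" "0 < qnumrad q B" using qnumrad_pos[OF card q] A B by auto
  then have D: "0 < D" unfolding D_def using s by (cases "s = 0") (auto intro: add_nonneg_pos add_pos_nonneg)
  have "cmod q * W \<le> W" using q by (intro mult_left_le_one_le) (auto simp: W_def)
  then have "(cmod q)\<^sup>2 * W \<le> cmod q * W"
    using q by (simp add: power2_eq_square mult.assoc mult_left_mono)
  also have "\<dots> \<le> (1 + (tan \<alpha>)\<^sup>2) / D"
    using cmod_wharm_le[OF card q A B s, of x y] D x y unfolding W_def D_def
    by (simp add: pos_le_divide_eq mult_ac)
  also have "\<dots> \<le> (1 / cos \<alpha>) ^ 3 / D"
    using one_plus_tan_sq_le_sec_cube[OF \<alpha>] D by (simp add: divide_right_mono)
  finally show ?thesis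
    unfolding W_def weighted_harmonic_mean_eq[OF ab(1)[THEN less_imp_neq, symmetric]] D_def
    by (simp add: divide_inverse)
qed

section \<open>Integration against the representing measure\<close>

lemma norm_bounded_linear_integral_le:
  fixes F :: "'a \<Rightarrow> 'b::{banach, second_countable_topology}"
    and L :: "'b \<Rightarrow> 'c::{banach, second_countable_topology}"
  assumes L: "bounded_linear L" and G: "integrable M G"
    and bound: "AE s in M. norm (L (F s)) \<le> G s"
  shows "norm (L (integral\<^sup>L M F)) \<le> integral\<^sup>L M G"
proof -
  have G_nonneg: "AE s in M. 0 \<le> G s"
    using bound by eventually_elim (rule order_trans[OF norm_ge_zero])
  \<comment> \<open>if \<open>F\<close> is not integrable, its integral is the junk value \<open>0\<close>\<close>
  show ?thesis
  proof (cases "integrable M F")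
    case True
    have "norm (L (integral\<^sup>L M F)) = norm (\<integral>s. L (F s) \<partial>M)"
      by (simp add: integral_bounded_linear[OF L True])
    also have "\<dots> \<le> (\<integral>s. norm (L (F s)) \<partial>M)" by (rule integral_norm_bound)
    also have "\<dots> \<le> integral\<^sup>L M G" by (rule integral_mono_AE'[OF G bound G_nonneg])
    finally show ?thesis .
  next
    case False
    then show ?thesis
      using integral_nonneg_AE[OF G_nonneg]
      by (simp add: not_integrable_integral_eq linear_0[OF bounded_linear.linear[OF L]])
  qed
qed

lemma prob_on_unit_AE_unit_interval:
  assumes "prob_on_unit \<nu>"
  shows "AE s in \<nu>. s \<in> {0..1}"
proof -
  interpret prob_space \<nu> using assms unfolding prob_on_unit_def by simp
  show ?thesis using assms unfolding prob_on_unit_def by (intro AE_prob_1) (simp add: measure_def)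
qed

lemma integrable_omfun_kernel:
  assumes \<nu>: "prob_on_unit \<nu>" and x: "0 < x"
  shows "integrable \<nu> (\<lambda>s. inverse ((1 - s) + s * inverse x))"
proof -
  interpret prob_space \<nu> using \<nu> unfolding prob_on_unit_def by simp
  have sets: "sets \<nu> = sets borel" using \<nu> unfolding prob_on_unit_def by simp
  have "AE s in \<nu>. norm (inverse ((1 - s) + s * inverse x)) \<le> max 1 x"
    using prob_on_unit_AE_unit_interval[OF \<nu>]
  proof eventually_elim
    case (elim s)
    define m where "m = min 1 (inverse x)"
    have m: "0 < m" unfolding m_def using x by simp
    have "(1 - s) * m + s * m \<le> (1 - s) * 1 + s * inverse x"
      using elim unfolding m_def by (intro add_mono mult_left_mono) auto
    then have "m \<le> (1 - s) + s * inverse x" by (simp add: algebra_simps)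
    then have "inverse ((1 - s) + s * inverse x) \<le> inverse m" using m by (rule le_imp_inverse_le)
    moreover have "inverse m = max 1 x"
    proof (cases "x \<le> 1")
      case True
      then have "1 \<le> inverse x" using x by (simp add: one_le_inverse)
      with True show ?thesis unfolding m_def by simp
    next
      case False
      then have "inverse x \<le> 1" by (simp add: inverse_le_1_iff)
      with False show ?thesis unfolding m_def by (simp add: min_absorb2)
    qed
    ultimately show ?case using m \<open>m \<le> (1 - s) + s * inverse x\<close> by simp
  qed
  moreover have "(\<lambda>s. inverse ((1 - s) + s * inverse x)) \<in> borel_measurable \<nu>"
    unfolding measurable_cong_sets[OF sets refl] by measurable
  ultimately show ?thesis by (rule integrable_const_bound)
qed

lemma sq_cmod_opmean_le:
  fixes A B :: "complex^'n::finite^'n"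
  assumes card: "CARD('n) \<ge> 2" and \<alpha>: "0 \<le> \<alpha>" "\<alpha> < pi / 2"
    and A: "A \<in> sectorial \<alpha>" and B: "B \<in> sectorial \<alpha>" and q: "0 < cmod q" "cmod q \<le> 1"
    and \<nu>: "prob_on_unit \<nu>" and x: "norm x = 1" and y: "norm y = 1"
  shows "(cmod q)\<^sup>2 * cmod (cinner (opmean \<nu> A B *v x) y)
    \<le> (1 / cos \<alpha>) ^ 3 * scmean \<nu> (qnumrad q A) (qnumrad q B)"
proof -
  define a where "a = qnumrad q A"
  define b where "b = qnumrad q B"
  define G where "G s = (1 / cos \<alpha>) ^ 3 * (a * inverse ((1 - s) + s * inverse (b / a)))" for s
  have "0 < a" "0 < b" unfolding a_def b_def using qnumrad_pos[OF card q] A B by auto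
  then have G: "integrable \<nu> G"
    unfolding G_def using integrable_omfun_kernel[OF \<nu>, of "b / a"] by simp
  let ?L = "\<lambda>M. (cmod q)\<^sup>2 *\<^sub>R cinner (M *v x) y"
  have "bounded_linear ?L"
    by (rule bounded_linear_compose[OF bounded_linear_scaleR_right bounded_linear_cinner_matrix_vector])
  moreover have "AE s in \<nu>. norm (?L (wharm s A B)) \<le> G s"
    using prob_on_unit_AE_unit_interval[OF \<nu>]
    by eventually_elim (use sq_cmod_wharm_le[OF card \<alpha> q A B _ _ x y] in \<open>simp add: G_def a_def b_def\<close>)
  ultimately have "norm (?L (opmean \<nu> A B)) \<le> integral\<^sup>L \<nu> G"
    unfolding opmean_def by (rule norm_bounded_linear_integral_le[OF _ G])
  also have "\<dots> = (1 / cos \<alpha>) ^ 3 * scmean \<nu> a b"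
    unfolding G_def scmean_def omfun_def by simp
  finally show ?thesis unfolding a_def b_def by simp
qed

theorem mainTheorem10:
  fixes A B :: "complex^'n::finite^'n" and q :: complex and \<alpha> :: real and \<nu> :: "real measure"
  assumes "CARD('n) \<ge> 2"
    and "0 \<le> \<alpha>" and "\<alpha> < pi / 2"
    and "A \<in> sectorial \<alpha>" and "B \<in> sectorial \<alpha>"
    and "0 < cmod q" and "cmod q \<le> 1"
    and "prob_on_unit \<nu>"
  shows "(cmod q)\<^sup>2 * qnumrad q (opmean \<nu> A B)
           \<le> (1 / cos \<alpha>) ^ 3 * scmean \<nu> (qnumrad q A) (qnumrad q B)"
proof -
  have "qnumrad q (opmean \<nu> A B)
      \<le> (1 / cos \<alpha>) ^ 3 * scmean \<nu> (qnumrad q A) (qnumrad q B) / (cmod q)\<^sup>2"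
  proof (rule qnumrad_least[OF exists_unit_pair_with_cinner[OF assms(1,7)]])
    fix x y :: "complex^'n" assume "norm x = 1" "norm y = 1"
    then show "cmod (cinner (opmean \<nu> A B *v x) y)
        \<le> (1 / cos \<alpha>) ^ 3 * scmean \<nu> (qnumrad q A) (qnumrad q B) / (cmod q)\<^sup>2"
      using sq_cmod_opmean_le[OF assms] assms(6) by (simp add: pos_le_divide_eq mult.commute)
  qed
  then show ?thesis using assms(6) by (simp add: pos_le_divide_eq mult.commute)
qed

end
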